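(* In the probit setting below (with proper posterior), $\lambda:=\sup_{t\in(0,1)}\sup_{\alpha\ne0}\frac{\|\Sigma^{-1/2}X^TD(\hat B+t\alpha)X\alpha\|^2}{\|\Sigma^{1/2}\alpha\|^2}<1$.
   Context: Probit setting: covariates $X_1,\dots,X_n\in\mathbb{R}^p$, responses $Y_i\in\{0,1\}$, $X$ the $n\times p$ matrix with rows $X_i^T$; prior $\omega(\beta)\propto\exp\{-\frac12(\beta-v)^TQ(\beta-v)\}$, $Q$ positive definite or zero; posterior density $\propto\prod_i\Phi(X_i^T\beta)^{Y_i}(1-\Phi(X_i^T\beta))^{1-Y_i}\omega(\beta)$ ($\Phi,\phi$ standard normal cdf/pdf), assumed proper; $\Sigma=X^TX+Q$; $\hat B$ the posterior mode (unique maximizer of the posterior density). $g(\theta)=\theta\phi(\theta)/\Phi(\theta)+(\phi(\theta)/\Phi(\theta))^2$; $D(\beta)$ is the diagonal $n\times n$ matrix with $i$th entry $1-g(X_i^T\beta)1_{\{1\}}(Y_i)-g(-X_i^T\beta)1_{\{0\}}(Y_i)$. *)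

theory Defs
  imports "HOL-Probability.Probability"
begin

definition phi :: "real \<Rightarrow> real" where
  "phi x = std_normal_density x"

definition Phi :: "real \<Rightarrow> real" where
  "Phi x = (LBINT t:{..x}. std_normal_density t)"

definition gfun :: "real \<Rightarrow> real" where
  "gfun \<theta> = \<theta> * phi \<theta> / Phi \<theta> + (phi \<theta> / Phi \<theta>)\<^sup>2"

definition prior_dens :: "real^'p^'p \<Rightarrow> real^'p \<Rightarrow> real^'p \<Rightarrow> real" where
  "prior_dens Q v \<beta> = exp (- (1/2) * ((\<beta> - v) \<bullet> (Q *v (\<beta> - v))))"

definition post_dens ::
  "real^'p^'n \<Rightarrow> real^'n \<Rightarrow> real^'p^'p \<Rightarrow> real^'p \<Rightarrow> real^'p \<Rightarrow> real" where
  "post_dens X Y Q v \<beta> =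
     (\<Prod>i\<in>UNIV. (if Y $ i = 1 then Phi ((X $ i) \<bullet> \<beta>) else 1 - Phi ((X $ i) \<bullet> \<beta>)))
     * prior_dens Q v \<beta>"

definition Dmat :: "real^'p^'n \<Rightarrow> real^'n \<Rightarrow> real^'p \<Rightarrow> real^'n^'n" where
  "Dmat X Y \<beta> = (\<chi> i j. if i = j then
      1 - gfun ((X $ i) \<bullet> \<beta>) * (if Y $ i = 1 then 1 else 0)
        - gfun (- ((X $ i) \<bullet> \<beta>)) * (if Y $ i = 0 then 1 else 0)
    else 0)"

definition pos_def_mat :: "real^'p^'p \<Rightarrow> bool" where
  "pos_def_mat Q \<longleftrightarrow> transpose Q = Q \<and> (\<forall>x. x \<noteq> 0 \<longrightarrow> x \<bullet> (Q *v x) > 0)"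

end

(*
  Write S = X^T X + Q and A = X^T D(beta) X = X^T (I - W) X, where W is the diagonal of the
  weights g(+-X_i^T beta) in (0, 1]. Then 0 <= A <= S, and Cauchy-Schwarz for the form of A gives
  (A a)^T S^-1 (A a) <= a^T A a = a^T S a - a^T (X^T W X + Q) a.  It remains to bound the last
  form below by a fixed multiple of a^T S a along every ray beta = Bhat + t a, t >= 0.  An
  observation misclassified by the direction a keeps its probit argument below |X_i^T Bhat| on
  that ray, and g is bounded away from 0 on such half-lines (g >= 1/2 far out, by a sharp Mills
  ratio bound).  Hence the form dominates a multiple of the overlap form
  sum_i min(0, +-X_i^T a)^2 + a^T Q a, which is continuous, positively 2-homogeneous and positive
  off 0, since a unique posterior mode excludes quasi-separation of the data; compactness of the
  unit sphere compares it with a^T S a.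
*)

theory Submission
  imports Defs "HOL-Real_Asymp.Real_Asymp"
begin

section \<open>The standard normal distribution and the function \<open>gfun\<close>\<close>

lemma phi_pos: "phi x > 0"
  unfolding phi_def by (simp add: std_normal_density_def)

lemma continuous_on_phi: "continuous_on S phi"
  unfolding phi_def std_normal_density_def by (intro continuous_intros) auto

lemma integrable_phi: "integrable lborel phi"
  unfolding phi_def by simp

lemma integrable_indicator_phi:
  "A \<in> sets lborel \<Longrightarrow> integrable lborel (\<lambda>t. indicator A t * phi t)"
  using integrable_mult_indicator[OF _ integrable_phi, of A] by simp

lemma has_real_derivative_phi: "(phi has_real_derivative (- x * phi x)) (at x)"
  unfolding phi_def std_normal_density_def
  by (rule derivative_eq_intros refl | simp)+

lemma phi_tendsto_at_bot:
  "(phi \<longlongrightarrow> 0) at_bot" "((\<lambda>x. x * phi x) \<longlongrightarrow> 0) at_bot"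
  "((\<lambda>x. phi x / x) \<longlongrightarrow> 0) at_bot" "((\<lambda>x. x * phi x / (x\<^sup>2 + 1/2)) \<longlongrightarrow> 0) at_bot"
  unfolding phi_def std_normal_density_def by real_asymp+

lemma Phi_eq_interval_integral: "Phi x = (LBINT t=-\<infinity>..ereal x. phi t)"
proof -
  have "Phi x = (LBINT t:{..x}. phi t)"
    unfolding Phi_def phi_def ..
  also have "\<dots> = (LBINT t:{..<x}. phi t)"
  proof (rule set_integral_null_delta)
    have "({..x} - {..<x}) \<union> ({..<x} - {..x}) = {x}" by auto
    then show "({..x} - {..<x}) \<union> ({..<x} - {..x}) \<in> null_sets lborel"
      by (simp add: finite_imp_null_set_lborel)
  qed (auto simp: integrable_phi)
  finally show ?thesis
    by (simp add: interval_lebesgue_integral_def)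
qed

lemma Phi_eq_Phi0_plus: "Phi x = Phi 0 + (LBINT t=ereal 0..ereal x. phi t)"
proof -
  have "integrable lborel (\<lambda>t. indicator (einterval (- \<infinity>) (max (ereal 0) (ereal x))) t * phi t)"
    by (simp add: integrable_indicator_phi)
  then show ?thesis
    unfolding Phi_eq_interval_integral
    using interval_integral_sum[of "-\<infinity>" "ereal 0" "ereal x" phi]
    by (auto simp: interval_lebesgue_integrable_def set_integrable_def)
qed

lemma has_real_derivative_Phi: "(Phi has_real_derivative phi x) (at x)"
proof -
  define a b where "a = min 0 x - 1" and "b = max 0 x + 1"
  have "((\<lambda>u. LBINT t=ereal 0..ereal u. phi t) has_vector_derivative phi x) (at x within {a..b})"
    using interval_integral_FTC2[of a 0 b phi x] by (auto simp: a_def b_def continuous_on_phi)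
  then have "((\<lambda>u. LBINT t=ereal 0..ereal u. phi t) has_vector_derivative phi x) (at x)"
    using at_within_Icc_at[of a x b] by (simp add: a_def b_def)
  then have "((\<lambda>u. Phi 0 + (LBINT t=ereal 0..ereal u. phi t)) has_real_derivative phi x) (at x)"
    by (auto intro!: derivative_eq_intros simp: has_real_derivative_iff_has_vector_derivative)
  also have "(\<lambda>u. Phi 0 + (LBINT t=ereal 0..ereal u. phi t)) = Phi"
    by (intro ext) (rule Phi_eq_Phi0_plus[symmetric])
  finally show ?thesis .
qed

lemma isCont_Phi: "isCont Phi x"
  using has_real_derivative_Phi DERIV_isCont by blast

lemma Phi_nonneg: "Phi x \<ge> 0"
  unfolding Phi_def set_lebesgue_integral_def
  by (auto intro!: Bochner_Integration.integral_nonneg simp: indicator_def)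

lemma Phi_le_1: "Phi x \<le> 1"
proof -
  have "integrable lborel (\<lambda>t. indicator {..x} t * std_normal_density t)"
    using integrable_indicator_phi[of "{..x}"] by (simp add: phi_def)
  then have "Phi x \<le> (\<integral>t. std_normal_density t \<partial>lborel)"
    unfolding Phi_def set_lebesgue_integral_def
    by (intro integral_mono) (auto simp: indicator_def)
  then show ?thesis by simp
qed

lemma Phi_mono:
  assumes "x \<le> y"
  shows "Phi x \<le> Phi y"
  using assms by (rule DERIV_nonneg_imp_nondecreasing[where f = Phi])
    (metis has_real_derivative_Phi phi_pos less_imp_le)

lemma Phi_pos: "Phi x > 0"
proof -
  have "Phi (x - 1) < Phi x"
    by (rule DERIV_pos_imp_increasing[where f = Phi]) (auto intro: has_real_derivative_Phi phi_pos)
  then show ?thesis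
    using Phi_nonneg[of "x - 1"] by linarith
qed

lemma Phi_tendsto_at_bot: "(Phi \<longlongrightarrow> 0) at_bot"
proof -
  have lim: "((\<lambda>a. LBINT t:{a..0}. phi t) \<longlongrightarrow> (LBINT t:{..0}. phi t)) at_bot"
    by (rule tendsto_set_lebesgue_integral_at_bot)
      (auto simp: set_integrable_def intro!: integrable_indicator_phi)
  have Phi_0: "Phi 0 = (LBINT t:{..0}. phi t)"
    unfolding Phi_def phi_def ..
  have "eventually (\<lambda>a. Phi 0 - (LBINT t:{a..0}. phi t) = Phi a) at_bot"
  proof (rule eventually_at_bot_linorder[THEN iffD2], intro exI allI impI)
    fix a :: real
    assume a: "a \<le> -1"
    have "(LBINT t:{a<..<0}. phi t) = (LBINT t:{a..0}. phi t)"
    proof (rule set_integral_null_delta)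
      have "({a<..<0} - {a..0}) \<union> ({a..0} - {a<..<0}) = {a, 0}" using a by auto
      then show "({a<..<0} - {a..0}) \<union> ({a..0} - {a<..<0}) \<in> null_sets lborel"
        by (simp add: finite_imp_null_set_lborel)
    qed (auto simp: integrable_phi)
    then show "Phi 0 - (LBINT t:{a..0}. phi t) = Phi a"
      using Phi_eq_Phi0_plus[of a] a by (simp add: interval_lebesgue_integral_def)
  qed
  moreover have "((\<lambda>a. Phi 0 - (LBINT t:{a..0}. phi t)) \<longlongrightarrow> 0) at_bot"
    using tendsto_diff[OF tendsto_const lim, of "Phi 0"] Phi_0 by simp
  ultimately show ?thesis
    by (rule Lim_transform_eventually[rotated])
qed

lemma DERIV_nonneg_imp_ge_at_bot:
  fixes f :: "real \<Rightarrow> real"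
  assumes "\<And>x. x \<le> b \<Longrightarrow> (f has_real_derivative f' x) (at x)"
    and "\<And>x. x \<le> b \<Longrightarrow> f' x \<ge> 0"
    and "(f \<longlongrightarrow> flim) at_bot"
  shows "flim \<le> f b"
proof -
  have "f x \<le> f b" if "x \<le> b" for x
    using that by (rule DERIV_nonneg_imp_nondecreasing) (use assms(1,2) in force)
  then have "eventually (\<lambda>x. f x \<le> f b) at_bot"
    unfolding eventually_at_bot_linorder by blast
  then show ?thesis
    using tendsto_upperbound[OF assms(3)] by auto
qed

lemma Phi_le_mills:
  assumes "x < 0"
  shows "Phi x \<le> - phi x / x"
proof -
  have "0 \<le> - phi x / x - Phi x"
  proof (rule DERIV_nonneg_imp_ge_at_bot[where f = "\<lambda>t. - phi t / t - Phi t" and b = x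
        and f' = "\<lambda>t. phi t / t\<^sup>2"])
    fix t :: real
    assume "t \<le> x"
    with assms have "t \<noteq> 0" by auto
    then show "((\<lambda>t. - phi t / t - Phi t) has_real_derivative phi t / t\<^sup>2) (at t)"
      by (auto intro!: derivative_eq_intros has_real_derivative_phi has_real_derivative_Phi
          simp: field_simps power2_eq_square)
    show "phi t / t\<^sup>2 \<ge> 0"
      using phi_pos[of t] by simp
  qed (use tendsto_diff[OF tendsto_minus[OF phi_tendsto_at_bot(3)] Phi_tendsto_at_bot] in simp)
  then show ?thesis by simp
qed

lemma Phi_le_mills_sharp:
  assumes "x < 0" "x\<^sup>2 \<ge> 3/2"
  shows "Phi x * (x\<^sup>2 + 1/2) \<le> - x * phi x"
proof -
  have "0 \<le> - x * phi x / (x\<^sup>2 + 1/2) - Phi x"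
  proof (rule DERIV_nonneg_imp_ge_at_bot[where f = "\<lambda>t. - t * phi t / (t\<^sup>2 + 1/2) - Phi t"
        and b = x and f' = "\<lambda>t. phi t * (t\<^sup>2/2 - 3/4) / (t\<^sup>2 + 1/2)\<^sup>2"])
    fix t :: real
    assume t: "t \<le> x"
    have q: "t\<^sup>2 + 1/2 \<noteq> 0"
      using zero_le_power2[of t] by linarith
    have "((\<lambda>t. - t * phi t / (t\<^sup>2 + 1/2) - Phi t) has_real_derivative
        ((- phi t + t * (t * phi t)) * (t\<^sup>2 + 1/2) - (- t * phi t) * (2 * t))
          / ((t\<^sup>2 + 1/2) * (t\<^sup>2 + 1/2)) - phi t) (at t)"
      by (intro DERIV_diff DERIV_divide has_real_derivative_Phi q)
        (auto intro!: derivative_eq_intros has_real_derivative_phi)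
    moreover have "((- phi t + t * (t * phi t)) * r - (- t * phi t) * (2 * t)) / (r * r) - phi t
        = phi t * (t\<^sup>2/2 - 3/4) / r\<^sup>2" if "r \<noteq> 0" "r = t\<^sup>2 + 1/2" for r
      using that by (simp add: field_simps power2_eq_square) algebra
    ultimately show "((\<lambda>t. - t * phi t / (t\<^sup>2 + 1/2) - Phi t) has_real_derivative
        phi t * (t\<^sup>2/2 - 3/4) / (t\<^sup>2 + 1/2)\<^sup>2) (at t)"
      using q by simp
    have "x\<^sup>2 \<le> t\<^sup>2"
      using t assms(1) by (simp flip: abs_le_square_iff)
    then show "0 \<le> phi t * (t\<^sup>2/2 - 3/4) / (t\<^sup>2 + 1/2)\<^sup>2"
      using assms(2) phi_pos[of t] by simp
  qed (use tendsto_diff[OF tendsto_minus[OF phi_tendsto_at_bot(4)] Phi_tendsto_at_bot] in simp)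
  moreover have "x\<^sup>2 + 1/2 > 0"
    using zero_le_power2[of x] by linarith
  ultimately show ?thesis
    by (simp add: field_simps)
qed

lemma x_Phi_tendsto_at_bot: "((\<lambda>x. x * Phi x) \<longlongrightarrow> 0) at_bot"
proof (rule tendsto_sandwich[where f = "\<lambda>x. - phi x" and h = "\<lambda>x. 0"])
  have "- phi x \<le> x * Phi x" if "x < 0" for x
    using mult_left_mono_neg[OF Phi_le_mills[OF that], of x] that by simp
  then show "eventually (\<lambda>x. - phi x \<le> x * Phi x) at_bot"
    unfolding eventually_at_bot_linorder by (intro exI[of _ "-1"]) auto
  show "eventually (\<lambda>x. x * Phi x \<le> 0) at_bot"
    unfolding eventually_at_bot_linorder
    by (auto intro!: exI[of _ 0] mult_nonpos_nonneg Phi_nonneg)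
qed (use tendsto_minus[OF phi_tendsto_at_bot(1)] in auto)

lemma x2_Phi_tendsto_at_bot: "((\<lambda>x. x\<^sup>2 * Phi x) \<longlongrightarrow> 0) at_bot"
proof (rule tendsto_sandwich[where f = "\<lambda>x. 0" and h = "\<lambda>x. - (x * phi x)"])
  have "x\<^sup>2 * Phi x \<le> - (x * phi x)" if "x < 0" for x
    using mult_left_mono[OF Phi_le_mills[OF that], of "x\<^sup>2"] that by (simp add: power2_eq_square)
  then show "eventually (\<lambda>x. x\<^sup>2 * Phi x \<le> - (x * phi x)) at_bot"
    unfolding eventually_at_bot_linorder by (intro exI[of _ "-1"]) auto
  show "eventually (\<lambda>x. 0 \<le> x\<^sup>2 * Phi x) at_bot"
    by (simp add: Phi_nonneg)
qed (use tendsto_minus[OF phi_tendsto_at_bot(2)] in auto)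

lemma x_Phi_plus_phi_pos: "x * Phi x + phi x > 0"
  by (rule DERIV_pos_imp_increasing_at_bot[where f = "\<lambda>x. x * Phi x + phi x", simplified])
    (auto intro!: exI derivative_eq_intros has_real_derivative_phi has_real_derivative_Phi Phi_pos
      simp: tendsto_add[OF x_Phi_tendsto_at_bot phi_tendsto_at_bot(1), simplified])

lemma one_plus_x2_Phi_plus_x_phi_pos: "(1 + x\<^sup>2) * Phi x + x * phi x > 0"
proof (rule DERIV_pos_imp_increasing_at_bot[where f = "\<lambda>x. (1 + x\<^sup>2) * Phi x + x * phi x"])
  fix t :: real
  show "\<exists>y. ((\<lambda>x. (1 + x\<^sup>2) * Phi x + x * phi x) has_real_derivative y) (at t) \<and> 0 < y"
    using x_Phi_plus_phi_pos[of t]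
    by (intro exI[of _ "2 * (t * Phi t + phi t)"])
      (auto intro!: derivative_eq_intros has_real_derivative_phi has_real_derivative_Phi
        simp: algebra_simps power2_eq_square)
next
  show "((\<lambda>x. (1 + x\<^sup>2) * Phi x + x * phi x) \<longlongrightarrow> 0) at_bot"
    using tendsto_add[OF tendsto_add[OF Phi_tendsto_at_bot x2_Phi_tendsto_at_bot] phi_tendsto_at_bot(2)]
    by (simp add: algebra_simps)
qed

lemma gfun_eq: "gfun x = phi x * (x * Phi x + phi x) / (Phi x)\<^sup>2"
  using Phi_pos[of x] unfolding gfun_def by (simp add: field_simps power2_eq_square)

lemma gfun_pos: "gfun x > 0"
  unfolding gfun_eq using Phi_pos[of x] phi_pos[of x] x_Phi_plus_phi_pos[of x] by simp

lemma gfun_le_1: "gfun x \<le> 1"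
proof -
  have "0 \<le> (Phi x)\<^sup>2 - x * phi x * Phi x - (phi x)\<^sup>2"
  proof (rule DERIV_nonneg_imp_ge_at_bot[where f = "\<lambda>t. (Phi t)\<^sup>2 - t * phi t * Phi t - (phi t)\<^sup>2"
        and b = x and f' = "\<lambda>t. phi t * ((1 + t\<^sup>2) * Phi t + t * phi t)"])
    fix t :: real
    show "((\<lambda>t. (Phi t)\<^sup>2 - t * phi t * Phi t - (phi t)\<^sup>2) has_real_derivative
        phi t * ((1 + t\<^sup>2) * Phi t + t * phi t)) (at t)"
      by (auto intro!: derivative_eq_intros has_real_derivative_phi has_real_derivative_Phi
          simp: algebra_simps power2_eq_square)
    show "0 \<le> phi t * ((1 + t\<^sup>2) * Phi t + t * phi t)"
      using one_plus_x2_Phi_plus_x_phi_pos[of t] phi_pos[of t] by simp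
  next
    show "((\<lambda>t. (Phi t)\<^sup>2 - t * phi t * Phi t - (phi t)\<^sup>2) \<longlongrightarrow> 0) at_bot"
      using tendsto_diff[OF tendsto_diff[OF tendsto_power[OF Phi_tendsto_at_bot, of 2]
          tendsto_mult[OF phi_tendsto_at_bot(2) Phi_tendsto_at_bot]] tendsto_power[OF phi_tendsto_at_bot(1), of 2]]
      by simp
  qed
  moreover have "gfun x = (x * phi x * Phi x + (phi x)\<^sup>2) / (Phi x)\<^sup>2"
    unfolding gfun_eq by (simp add: algebra_simps power2_eq_square)
  ultimately show ?thesis
    using Phi_pos[of x] by simp
qed

lemma isCont_gfun: "isCont gfun x"
  unfolding gfun_def using Phi_pos[of x]
  by (auto intro!: continuous_intros isCont_Phi DERIV_isCont[OF has_real_derivative_phi])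

lemma gfun_ge_half:
  assumes "x < 0" "x\<^sup>2 \<ge> 3/2"
  shows "gfun x \<ge> 1/2"
proof -
  define y r where "y = - x" and "r = phi x / Phi x"
  have y: "y > 0"
    using assms(1) by (simp add: y_def)
  \<comment> \<open>\<open>gfun x = r (r - y)\<close> for the inverse Mills ratio \<open>r\<close>, and the sharp Mills bound is \<open>r \<ge> y + 1/(2y)\<close>\<close>
  have "Phi x * (y\<^sup>2 + 1/2) \<le> y * phi x"
    using Phi_le_mills_sharp[OF assms] by (simp add: y_def)
  then have "(y\<^sup>2 + 1/2) / y \<le> r"
    using y Phi_pos[of x] by (simp add: r_def field_simps)
  then have gap: "1 / (2 * y) \<le> r - y"
    using y by (simp add: field_simps power2_eq_square)
  moreover have "y \<le> r"
    using gap y by (smt (verit) zero_less_divide_1_iff)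
  ultimately have "y * (1 / (2 * y)) \<le> r * (r - y)"
    using y by (intro mult_mono) auto
  moreover have "gfun x = r * (r - y)"
    by (simp add: gfun_def r_def y_def power2_eq_square algebra_simps)
  ultimately show ?thesis
    using y by simp
qed

lemma gfun_bounded_below_on_halfline: "\<exists>\<gamma>>0. \<forall>u\<le>b. \<gamma> \<le> gfun u"
proof -
  obtain m where m: "\<forall>u\<in>{-2..max b (-2)}. gfun m \<le> gfun u"
    using continuous_attains_inf[of "{-2..max b (-2)}" gfun]
    by (auto intro: continuous_at_imp_continuous_on isCont_gfun)
  have "min (1/2) (gfun m) \<le> gfun u" if "u \<le> b" for u
  proof (cases "u \<le> -2")
    case True
    then have "2 * 2 \<le> (- u) * (- u)"
      by (intro mult_mono) auto
    then show ?thesis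
      using True gfun_ge_half[of u] by (simp add: power2_eq_square)
  next
    case False
    then show ?thesis
      using that m[rule_format, of u] by (simp add: min_le_iff_disj)
  qed
  moreover have "min (1/2) (gfun m) > 0"
    using gfun_pos[of m] by simp
  ultimately show ?thesis by blast
qed

section \<open>Quadratic forms\<close>

definition diag_mat :: "('n \<Rightarrow> 'a::zero) \<Rightarrow> 'a^'n^'n" where
  "diag_mat d = (\<chi> i j. if i = j then d i else 0)"

lemma mat_eq_diag_mat: "mat k = diag_mat (\<lambda>_. k)"
  by (simp add: mat_def diag_mat_def)

lemma diag_mat_mult_vec: "diag_mat d *v (w :: 'a::semiring_1^'n) = (\<chi> i. d i * w $ i)"
proof -
  have "(\<Sum>j\<in>UNIV. (if i = j then d i else 0) * w $ j) = (\<Sum>j\<in>UNIV. if i = j then d i * w $ j else 0)" for i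
    by (rule sum.cong) auto
  then show ?thesis
    by (simp add: diag_mat_def matrix_vector_mult_def vec_eq_iff)
qed

lemma matrix_vector_mult_nth_inner: "(X *v x) $ i = X $ i \<bullet> (x :: real^'p)"
  by (simp add: matrix_vector_mult_def inner_vec_def mult.commute)

lemma inner_transpose_mult_vec: "x \<bullet> (transpose X *v z) = (X *v x) \<bullet> (z :: real^'n)"
  for X :: "real^'p^'n"
  by (metis dot_lmul_matrix inner_commute transpose_matrix_vector)

lemma inner_conj_diag_mat:
  fixes X :: "real^'p^'n"
  shows "x \<bullet> ((transpose X ** diag_mat d ** X) *v y) = (\<Sum>i\<in>UNIV. d i * (X $ i \<bullet> x) * (X $ i \<bullet> y))"
proof -
  have "x \<bullet> ((transpose X ** diag_mat d ** X) *v y) = (X *v x) \<bullet> (\<chi> i. d i * (X *v y) $ i)"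
    by (simp only: matrix_vector_mul_assoc[symmetric] matrix_mul_assoc inner_transpose_mult_vec
        diag_mat_mult_vec)
  then show ?thesis
    by (simp add: inner_vec_def matrix_vector_mult_nth_inner mult_ac)
qed

lemma inner_gram:
  fixes X :: "real^'p^'n"
  shows "x \<bullet> ((transpose X ** X) *v y) = (\<Sum>i\<in>UNIV. (X $ i \<bullet> x) * (X $ i \<bullet> y))"
  using inner_conj_diag_mat[of x X "\<lambda>_. 1" y] by (simp flip: mat_eq_diag_mat)

lemma quadratic_form_gram_plus:
  fixes X :: "real^'p^'n"
  shows "x \<bullet> ((transpose X ** X + Q) *v x) = (\<Sum>i\<in>UNIV. (X $ i \<bullet> x)\<^sup>2) + x \<bullet> (Q *v x)"
  by (simp add: matrix_vector_mult_add_rdistrib inner_add_right inner_gram power2_eq_square)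

lemma weighted_Cauchy_Schwarz:
  fixes d u w :: "'i \<Rightarrow> real"
  assumes "\<And>i. d i \<ge> 0"
  shows "(\<Sum>i\<in>I. d i * u i * w i)\<^sup>2 \<le> (\<Sum>i\<in>I. d i * (u i)\<^sup>2) * (\<Sum>i\<in>I. d i * (w i)\<^sup>2)"
  using Cauchy_Schwarz_ineq_sum[where a = "\<lambda>i. sqrt (d i) * u i" and b = "\<lambda>i. sqrt (d i) * w i" and I = I] assms
  by (simp add: power_mult_distrib mult_ac flip: power2_eq_square)

text \<open>If \<open>0 \<le> A \<le> S\<close> in the Loewner order, then \<open>(A a)\<^sup>T S\<^sup>-\<^sup>1 (A a) \<le> a\<^sup>T A a\<close>: with
  \<open>y = S\<^sup>-\<^sup>1 A a\<close> and \<open>q = y\<^sup>T A a = y\<^sup>T S y\<close>, Cauchy-Schwarz for the form of \<open>A\<close> gives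
  \<open>q\<^sup>2 \<le> (y\<^sup>T A y) (a\<^sup>T A a) \<le> q (a\<^sup>T A a)\<close>.\<close>
lemma inner_inverse_conj_diag_mat_le:
  fixes X :: "real^'p^'n" and Q S' :: "real^'p^'p"
  assumes d: "\<And>i. 0 \<le> d i" "\<And>i. d i \<le> 1"
    and Q: "\<And>y. 0 \<le> y \<bullet> (Q *v y)"
    and S': "(transpose X ** X + Q) ** S' = mat 1"
  defines "A \<equiv> transpose X ** diag_mat d ** X"
  shows "(A *v a) \<bullet> (S' *v (A *v a)) \<le> a \<bullet> (A *v a)"
proof -
  define y where "y = S' *v (A *v a)"
  define q where "q = y \<bullet> (A *v a)"
  have "(transpose X ** X + Q) *v y = A *v a"
    by (metis y_def matrix_vector_mul_assoc S' matrix_vector_mul_lid)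
  then have q_eq: "q = (\<Sum>i\<in>UNIV. (X $ i \<bullet> y)\<^sup>2) + y \<bullet> (Q *v y)"
    unfolding q_def by (metis quadratic_form_gram_plus)
  have Ay: "y \<bullet> (A *v y) = (\<Sum>i\<in>UNIV. d i * (X $ i \<bullet> y)\<^sup>2)"
    by (simp add: A_def inner_conj_diag_mat power2_eq_square mult.assoc)
  have Aa: "a \<bullet> (A *v a) = (\<Sum>i\<in>UNIV. d i * (X $ i \<bullet> a)\<^sup>2)"
    by (simp add: A_def inner_conj_diag_mat power2_eq_square mult.assoc)
  have "y \<bullet> (A *v y) \<le> (\<Sum>i\<in>UNIV. (X $ i \<bullet> y)\<^sup>2)"
    unfolding Ay by (intro sum_mono) (simp add: d mult_left_le_one_le)
  then have Ay_le: "y \<bullet> (A *v y) \<le> q" and q_nonneg: "0 \<le> q"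
    using q_eq Q[of y] Ay d(1) by (auto intro!: add_nonneg_nonneg sum_nonneg)
  have Aa_nonneg: "0 \<le> a \<bullet> (A *v a)"
    unfolding Aa using d(1) by (simp add: sum_nonneg)
  have "q\<^sup>2 \<le> y \<bullet> (A *v y) * (a \<bullet> (A *v a))"
    using weighted_Cauchy_Schwarz[of d "\<lambda>i. X $ i \<bullet> y" "\<lambda>i. X $ i \<bullet> a" UNIV, OF d(1)]
    unfolding Ay Aa q_def unfolding A_def inner_conj_diag_mat .
  also have "\<dots> \<le> q * (a \<bullet> (A *v a))"
    using Ay_le Aa_nonneg by (rule mult_right_mono)
  finally have "q \<le> a \<bullet> (A *v a)"
    using q_nonneg Aa_nonneg by (cases "q = 0") (auto simp: power2_eq_square)
  then show ?thesis
    by (simp add: q_def y_def inner_commute)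
qed

lemma positive_definite_imp_invertible:
  fixes S :: "real^'p^'p"
  assumes "\<And>a. a \<noteq> 0 \<Longrightarrow> a \<bullet> (S *v a) > 0"
  shows "invertible S"
proof -
  have "inj ((*v) S)"
  proof (rule injI)
    fix x y
    assume "S *v x = S *v y"
    then have "(x - y) \<bullet> (S *v (x - y)) = 0"
      by (simp add: matrix_vector_mult_diff_distrib)
    then show "x = y"
      using assms[of "x - y"] by force
  qed
  then show ?thesis
    by (simp add: invertible_left_inverse matrix_left_invertible_injective)
qed

lemma matrix_inv_right: "invertible A \<Longrightarrow> A ** matrix_inv A = mat 1"
  unfolding invertible_def matrix_inv_def by (rule someI2_ex) auto

lemma positively_homogeneous_quadratic_dominates:
  fixes F G :: "'a::euclidean_space \<Rightarrow> real"
  assumes "continuous_on UNIV F" "continuous_on UNIV G"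
    and F_scale: "\<And>c x. 0 \<le> c \<Longrightarrow> F (c *\<^sub>R x) = c\<^sup>2 * F x"
    and G_scale: "\<And>c x. 0 \<le> c \<Longrightarrow> G (c *\<^sub>R x) = c\<^sup>2 * G x"
    and F_pos: "\<And>x. x \<noteq> 0 \<Longrightarrow> 0 < F x"
  shows "\<exists>\<kappa>>0. \<forall>x. \<kappa> * G x \<le> F x"
proof -
  have sphere: "compact (sphere (0::'a) 1)" "sphere (0::'a) 1 \<noteq> {}"
    by simp_all
  obtain u0 where u0: "norm u0 = 1" and F_min: "\<And>u. norm u = 1 \<Longrightarrow> F u0 \<le> F u"
    using continuous_attains_inf[OF sphere continuous_on_subset[OF assms(1)]] by auto
  obtain u1 where G_max: "\<And>u. norm u = 1 \<Longrightarrow> G u \<le> G u1"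
    using continuous_attains_sup[OF sphere continuous_on_subset[OF assms(2)]] by (metis mem_sphere_0 subset_UNIV)
  define M where "M = max 1 (G u1)"
  have "u0 \<noteq> 0"
    using u0 by auto
  then have "F u0 > 0" "M > 0"
    using F_pos by (auto simp: M_def)
  have "F u0 / M * G x \<le> F x" for x
  proof (cases "x = 0")
    case True
    then show ?thesis
      using F_scale[of 0 x] G_scale[of 0 x] by simp
  next
    case False
    define u where "u = x /\<^sub>R norm x"
    have u: "norm u = 1" and x: "x = norm x *\<^sub>R u"
      using False by (simp_all add: u_def)
    have "G u \<le> M"
      using G_max[OF u] by (simp add: M_def)
    then have "F u0 / M * G u \<le> F u0 / M * M"
      using \<open>F u0 > 0\<close> \<open>M > 0\<close> by (intro mult_left_mono) auto
    also have "\<dots> \<le> F u"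
      using F_min[OF u] \<open>M > 0\<close> by simp
    finally have "(norm x)\<^sup>2 * (F u0 / M * G u) \<le> (norm x)\<^sup>2 * F u"
      by (intro mult_left_mono) auto
    then show ?thesis
      using F_scale[of "norm x" u] G_scale[of "norm x" u] x by (simp add: mult_ac)
  qed
  then show ?thesis
    using \<open>F u0 > 0\<close> \<open>M > 0\<close> by (intro exI[of _ "F u0 / M"]) auto
qed

section \<open>The probit posterior\<close>

definition label_sign :: "real^'n \<Rightarrow> 'n \<Rightarrow> real" where
  "label_sign Y i = (if Y $ i = 1 then 1 else -1)"

definition probit_weight :: "real^'p^'n \<Rightarrow> real^'n \<Rightarrow> real^'p \<Rightarrow> 'n \<Rightarrow> real" where
  "probit_weight X Y \<beta> i = gfun (label_sign Y i * (X $ i \<bullet> \<beta>))"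

text \<open>\<open>\<alpha>\<^sup>T (X\<^sup>T W(\<beta>) X + Q) \<alpha>\<close> with \<open>W(\<beta>) = I - D(\<beta>)\<close>, the negative Hessian of the log posterior.\<close>
definition hessian_form :: "real^'p^'n \<Rightarrow> real^'n \<Rightarrow> real^'p^'p \<Rightarrow> real^'p \<Rightarrow> real^'p \<Rightarrow> real" where
  "hessian_form X Y Q \<beta> \<alpha> = (\<Sum>i\<in>UNIV. probit_weight X Y \<beta> i * (X $ i \<bullet> \<alpha>)\<^sup>2) + \<alpha> \<bullet> (Q *v \<alpha>)"

text \<open>Only observations misclassified by the direction \<open>\<alpha>\<close> contribute: for \<open>Q = 0\<close> the form
  vanishes at \<open>\<alpha> \<noteq> 0\<close> exactly when \<open>\<alpha>\<close> quasi-separates the data.\<close>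
definition overlap_form :: "real^'p^'n \<Rightarrow> real^'n \<Rightarrow> real^'p^'p \<Rightarrow> real^'p \<Rightarrow> real" where
  "overlap_form X Y Q \<alpha> = (\<Sum>i\<in>UNIV. (min 0 (label_sign Y i * (X $ i \<bullet> \<alpha>)))\<^sup>2) + \<alpha> \<bullet> (Q *v \<alpha>)"

lemma label_sign_square [simp]: "(label_sign Y i)\<^sup>2 = 1"
  by (simp add: label_sign_def)

lemma probit_weight_pos: "0 < probit_weight X Y \<beta> i"
  by (simp add: probit_weight_def gfun_pos)

lemma probit_weight_le_1: "probit_weight X Y \<beta> i \<le> 1"
  by (simp add: probit_weight_def gfun_le_1)

lemma Dmat_eq_diag_mat:
  assumes "\<forall>i. Y $ i \<in> {0, 1}"
  shows "Dmat X Y \<beta> = diag_mat (\<lambda>i. 1 - probit_weight X Y \<beta> i)"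
proof -
  have "Y $ i = 0 \<or> Y $ i = 1" for i
    using assms by auto
  then show ?thesis
    unfolding Dmat_def diag_mat_def probit_weight_def label_sign_def vec_eq_iff
    by (auto simp: vec_lambda_beta)
qed

lemma pos_def_mat_or_zero_nonneg: "pos_def_mat Q \<or> Q = 0 \<Longrightarrow> 0 \<le> x \<bullet> (Q *v x)"
  unfolding pos_def_mat_def by (cases "x = 0") (auto intro: less_imp_le)

lemma post_dens_flat_prior_mono:
  assumes "\<forall>i. 0 \<le> label_sign Y i * (X $ i \<bullet> \<alpha>)"
  shows "post_dens X Y 0 v \<beta> \<le> post_dens X Y 0 v (\<beta> + \<alpha>)"
  unfolding post_dens_def prior_dens_def
proof (simp, intro prod_mono conjI)
  fix i
  show "0 \<le> (if Y $ i = 1 then Phi (X $ i \<bullet> \<beta>) else 1 - Phi (X $ i \<bullet> \<beta>))"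
    using Phi_nonneg Phi_le_1 by simp
  show "(if Y $ i = 1 then Phi (X $ i \<bullet> \<beta>) else 1 - Phi (X $ i \<bullet> \<beta>))
      \<le> (if Y $ i = 1 then Phi (X $ i \<bullet> (\<beta> + \<alpha>)) else 1 - Phi (X $ i \<bullet> (\<beta> + \<alpha>)))"
    using assms[rule_format, of i]
    by (auto simp: label_sign_def inner_add_right intro!: Phi_mono split: if_splits)
qed

lemma overlap_form_pos:
  assumes Q: "pos_def_mat Q \<or> Q = 0"
    and mode: "\<forall>\<beta>. \<beta> \<noteq> Bhat \<longrightarrow> post_dens X Y Q v \<beta> < post_dens X Y Q v Bhat"
    and "\<alpha> \<noteq> 0"
  shows "0 < overlap_form X Y Q \<alpha>"
proof (cases "pos_def_mat Q")
  case True
  then have "0 < \<alpha> \<bullet> (Q *v \<alpha>)"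
    using \<open>\<alpha> \<noteq> 0\<close> by (simp add: pos_def_mat_def)
  then show ?thesis
    unfolding overlap_form_def by (intro add_nonneg_pos sum_nonneg) auto
next
  case False
  with Q have "Q = 0" by simp
  show ?thesis
  proof (rule ccontr)
    assume "\<not> ?thesis"
    then have "(\<Sum>i\<in>UNIV. (min 0 (label_sign Y i * (X $ i \<bullet> \<alpha>)))\<^sup>2) = 0"
      using \<open>Q = 0\<close> by (simp add: overlap_form_def antisym sum_nonneg)
    then have "\<forall>i. 0 \<le> label_sign Y i * (X $ i \<bullet> \<alpha>)"
      by (simp add: sum_nonneg_eq_0_iff min_def split: if_splits) fastforce
    then have "post_dens X Y Q v Bhat \<le> post_dens X Y Q v (Bhat + \<alpha>)"
      using \<open>Q = 0\<close> by (simp add: post_dens_flat_prior_mono)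
    then show False
      using mode \<open>\<alpha> \<noteq> 0\<close> by (metis add_cancel_left_right not_less)
  qed
qed

lemma continuous_on_overlap_form: "continuous_on UNIV (overlap_form X Y Q)"
  unfolding overlap_form_def
  by (intro continuous_intros linear_continuous_on matrix_vector_mul_bounded_linear)

lemma overlap_form_scaleR:
  assumes "0 \<le> c"
  shows "overlap_form X Y Q (c *\<^sub>R \<alpha>) = c\<^sup>2 * overlap_form X Y Q \<alpha>"
proof -
  have "min 0 (label_sign Y i * (X $ i \<bullet> (c *\<^sub>R \<alpha>))) = c * min 0 (label_sign Y i * (X $ i \<bullet> \<alpha>))" for i
    using assms by (simp add: min_mult_distrib_left mult.left_commute)
  then show ?thesis
    by (simp add: overlap_form_def power_mult_distrib sum_distrib_left algebra_simps power2_eq_square)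
qed

lemma overlap_form_le_gram:
  fixes X :: "real^'p^'n"
  shows "overlap_form X Y Q \<alpha> \<le> \<alpha> \<bullet> ((transpose X ** X + Q) *v \<alpha>)"
proof -
  have "(min 0 (label_sign Y i * (X $ i \<bullet> \<alpha>)))\<^sup>2 \<le> (X $ i \<bullet> \<alpha>)\<^sup>2" for i
  proof -
    have "(min 0 (label_sign Y i * (X $ i \<bullet> \<alpha>)))\<^sup>2 \<le> (label_sign Y i * (X $ i \<bullet> \<alpha>))\<^sup>2"
      by (simp flip: abs_le_square_iff)
    then show ?thesis
      by (simp add: power_mult_distrib)
  qed
  then show ?thesis
    unfolding overlap_form_def quadratic_form_gram_plus by (simp add: sum_mono)
qed

lemma hessian_form_ge_overlap_form:
  fixes X :: "real^'p^'n" and Bhat :: "real^'p"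
  assumes Q: "\<And>y. 0 \<le> y \<bullet> (Q *v y)"
  shows "\<exists>\<gamma>>0. \<forall>t\<ge>0. \<forall>\<alpha>. \<gamma> * overlap_form X Y Q \<alpha> \<le> hessian_form X Y Q (Bhat + t *\<^sub>R \<alpha>) \<alpha>"
proof -
  obtain \<gamma> where "\<gamma> > 0" and \<gamma>: "\<And>u. u \<le> (\<Sum>i\<in>UNIV. \<bar>X $ i \<bullet> Bhat\<bar>) \<Longrightarrow> \<gamma> \<le> gfun u"
    using gfun_bounded_below_on_halfline by blast
  have "\<gamma> \<le> 1"
    using \<gamma>[OF order.refl] gfun_le_1 order.trans by blast
  have term_ge: "\<gamma> * (min 0 (label_sign Y i * (X $ i \<bullet> \<alpha>)))\<^sup>2
      \<le> probit_weight X Y (Bhat + t *\<^sub>R \<alpha>) i * (X $ i \<bullet> \<alpha>)\<^sup>2" if "0 \<le> t" for t \<alpha> i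
  proof (cases "label_sign Y i * (X $ i \<bullet> \<alpha>) < 0")
    case True
    have "label_sign Y i * (X $ i \<bullet> (Bhat + t *\<^sub>R \<alpha>))
        = label_sign Y i * (X $ i \<bullet> Bhat) + t * (label_sign Y i * (X $ i \<bullet> \<alpha>))"
      by (simp add: inner_add_right algebra_simps)
    also have "\<dots> \<le> \<bar>X $ i \<bullet> Bhat\<bar>"
    proof -
      have "label_sign Y i * (X $ i \<bullet> Bhat) \<le> \<bar>X $ i \<bullet> Bhat\<bar>"
        by (simp add: label_sign_def abs_if)
      then show ?thesis
        using mult_nonneg_nonpos[OF that less_imp_le[OF True]] by linarith
    qed
    also have "\<dots> \<le> (\<Sum>i\<in>UNIV. \<bar>X $ i \<bullet> Bhat\<bar>)"
      by (rule member_le_sum) auto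
    finally have "\<gamma> \<le> probit_weight X Y (Bhat + t *\<^sub>R \<alpha>) i"
      unfolding probit_weight_def by (rule \<gamma>)
    then show ?thesis
      using True by (simp add: power_mult_distrib mult_right_mono)
  next
    case False
    then show ?thesis
      using probit_weight_pos[of X Y "Bhat + t *\<^sub>R \<alpha>" i] by simp
  qed
  have "\<gamma> * overlap_form X Y Q \<alpha> \<le> hessian_form X Y Q (Bhat + t *\<^sub>R \<alpha>) \<alpha>" if "0 \<le> t" for t \<alpha>
    unfolding overlap_form_def hessian_form_def distrib_left sum_distrib_left
    using term_ge[OF that] mult_left_le_one_le[OF Q[of \<alpha>] less_imp_le[OF \<open>\<gamma> > 0\<close>] \<open>\<gamma> \<le> 1\<close>]
    by (intro add_mono sum_mono) auto
  then show ?thesis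
    using \<open>\<gamma> > 0\<close> by blast
qed

lemma gram_form_split:
  fixes X :: "real^'p^'n"
  assumes "\<forall>i. Y $ i \<in> {0, 1}"
  shows "\<alpha> \<bullet> ((transpose X ** X + Q) *v \<alpha>)
    = \<alpha> \<bullet> ((transpose X ** Dmat X Y \<beta> ** X) *v \<alpha>) + hessian_form X Y Q \<beta> \<alpha>"
  unfolding quadratic_form_gram_plus Dmat_eq_diag_mat[OF assms] inner_conj_diag_mat hessian_form_def
  by (simp add: algebra_simps power2_eq_square sum_subtractf)

lemma probit_inverse_form_le:
  fixes X :: "real^'p^'n" and \<beta> :: "real^'p"
  assumes "\<forall>i. Y $ i \<in> {0, 1}" and "\<And>y. 0 \<le> y \<bullet> (Q *v y)"
    and "(transpose X ** X + Q) ** S' = mat 1"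
  defines "A \<equiv> transpose X ** Dmat X Y \<beta> ** X"
  shows "(A *v \<alpha>) \<bullet> (S' *v (A *v \<alpha>)) \<le> \<alpha> \<bullet> ((transpose X ** X + Q) *v \<alpha>) - hessian_form X Y Q \<beta> \<alpha>"
proof -
  have "(A *v \<alpha>) \<bullet> (S' *v (A *v \<alpha>)) \<le> \<alpha> \<bullet> (A *v \<alpha>)"
    using inner_inverse_conj_diag_mat_le[where d = "\<lambda>i. 1 - probit_weight X Y \<beta> i", OF _ _ assms(2,3)]
      probit_weight_pos[of X Y \<beta>] probit_weight_le_1[of X Y \<beta>]
    by (simp add: A_def Dmat_eq_diag_mat[OF assms(1)] less_imp_le)
  also have "\<dots> = \<alpha> \<bullet> ((transpose X ** X + Q) *v \<alpha>) - hessian_form X Y Q \<beta> \<alpha>"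
    using gram_form_split[OF assms(1), where X = X and Q = Q and \<beta> = \<beta> and \<alpha> = \<alpha>]
    by (simp add: A_def)
  finally show ?thesis .
qed

theorem proposition15:
  fixes X :: "real^'p^'n" and Y :: "real^'n" and Q :: "real^'p^'p"
    and v :: "real^'p" and Bhat :: "real^'p"
  assumes Y01: "\<forall>i. Y $ i \<in> {0, 1}"
    and Qprior: "pos_def_mat Q \<or> Q = 0"
    and proper: "integrable lborel (post_dens X Y Q v)"
    and mode: "\<forall>\<beta>. \<beta> \<noteq> Bhat \<longrightarrow> post_dens X Y Q v \<beta> < post_dens X Y Q v Bhat"
  shows "(let \<Sigma> = transpose X ** X + Q in
          (SUP t\<in>{0<..<1::real}. SUP \<alpha>\<in>{\<alpha>::real^'p. \<alpha> \<noteq> 0}.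
             ereal (((transpose X ** Dmat X Y (Bhat + t *\<^sub>R \<alpha>) ** X) *v \<alpha>) \<bullet>
                      (matrix_inv \<Sigma> *v ((transpose X ** Dmat X Y (Bhat + t *\<^sub>R \<alpha>) ** X) *v \<alpha>))
                    / (\<alpha> \<bullet> (\<Sigma> *v \<alpha>))))) < 1"
proof -
  define S where "S = transpose X ** X + Q"
  have Q: "\<And>y. 0 \<le> y \<bullet> (Q *v y)"
    using Qprior by (rule pos_def_mat_or_zero_nonneg)
  have S_pos: "0 < \<alpha> \<bullet> (S *v \<alpha>)" if "\<alpha> \<noteq> 0" for \<alpha>
    using overlap_form_pos[OF Qprior mode that] overlap_form_le_gram[of X Y Q \<alpha>] by (simp add: S_def)
  have "continuous_on UNIV (\<lambda>\<alpha>. \<alpha> \<bullet> (S *v \<alpha>))"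
    by (intro continuous_intros linear_continuous_on matrix_vector_mul_bounded_linear)
  moreover have "(r *\<^sub>R \<alpha>) \<bullet> (S *v (r *\<^sub>R \<alpha>)) = r\<^sup>2 * (\<alpha> \<bullet> (S *v \<alpha>))" for r \<alpha>
    by (simp add: matrix_vector_mult_scaleR power2_eq_square)
  ultimately obtain c where "c > 0" and c: "\<And>\<alpha>. c * (\<alpha> \<bullet> (S *v \<alpha>)) \<le> overlap_form X Y Q \<alpha>"
    using positively_homogeneous_quadratic_dominates[OF continuous_on_overlap_form _ overlap_form_scaleR _
        overlap_form_pos[OF Qprior mode]]
    by blast
  obtain \<gamma> where "\<gamma> > 0"
    and \<gamma>: "\<And>t \<alpha>. 0 \<le> t \<Longrightarrow> \<gamma> * overlap_form X Y Q \<alpha> \<le> hessian_form X Y Q (Bhat + t *\<^sub>R \<alpha>) \<alpha>"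
    using hessian_form_ge_overlap_form[OF Q] by blast
  have "invertible S"
    using S_pos by (rule positive_definite_imp_invertible)
  then have S_inv: "(transpose X ** X + Q) ** matrix_inv S = mat 1"
    unfolding S_def by (rule matrix_inv_right)
  have bound: "((transpose X ** Dmat X Y (Bhat + t *\<^sub>R \<alpha>) ** X) *v \<alpha>) \<bullet>
        (matrix_inv S *v ((transpose X ** Dmat X Y (Bhat + t *\<^sub>R \<alpha>) ** X) *v \<alpha>))
        / (\<alpha> \<bullet> (S *v \<alpha>)) \<le> 1 - \<gamma> * c" if "t \<in> {0<..<1}" "\<alpha> \<noteq> 0" for t \<alpha>
  proof -
    have "\<gamma> * (c * (\<alpha> \<bullet> (S *v \<alpha>))) \<le> hessian_form X Y Q (Bhat + t *\<^sub>R \<alpha>) \<alpha>"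
      using mult_left_mono[OF c less_imp_le[OF \<open>\<gamma> > 0\<close>], of \<alpha>] \<gamma>[of t \<alpha>] that(1) by simp
    then have "((transpose X ** Dmat X Y (Bhat + t *\<^sub>R \<alpha>) ** X) *v \<alpha>) \<bullet>
        (matrix_inv S *v ((transpose X ** Dmat X Y (Bhat + t *\<^sub>R \<alpha>) ** X) *v \<alpha>))
        \<le> (1 - \<gamma> * c) * (\<alpha> \<bullet> (S *v \<alpha>))"
      using probit_inverse_form_le[OF Y01 Q S_inv, of "Bhat + t *\<^sub>R \<alpha>" \<alpha>]
      by (simp add: S_def algebra_simps)
    then show ?thesis
      using S_pos[OF that(2)] by (simp add: pos_divide_le_eq)
  qed
  have "(SUP t\<in>{0<..<1::real}. SUP \<alpha>\<in>{\<alpha>::real^'p. \<alpha> \<noteq> 0}.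
             ereal (((transpose X ** Dmat X Y (Bhat + t *\<^sub>R \<alpha>) ** X) *v \<alpha>) \<bullet>
                      (matrix_inv S *v ((transpose X ** Dmat X Y (Bhat + t *\<^sub>R \<alpha>) ** X) *v \<alpha>))
                    / (\<alpha> \<bullet> (S *v \<alpha>)))) \<le> ereal (1 - \<gamma> * c)"
    using bound by (intro SUP_least) auto
  also have "\<dots> < 1"
    using \<open>\<gamma> > 0\<close> \<open>c > 0\<close> by simp
  finally show ?thesis
    unfolding Let_def S_def .
qed

end
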